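(* Let $(G,X,\Gamma)$ be a $(\mu,\nu)$-path system group, let $\eta\ge0$, and assume $G$ contains an $\eta$-quasi-convex element $(g,A)$. There exists $\theta=\theta(\eta,g,A)\ge1$ such that for every $\eta$-quasi-convex subgroup $(H,Y)$ of $G$: (I) for every $u\in G$, if $\operatorname{diam}(uA\cap Y)>\theta$ then $uA\subseteq Y^{+\theta}$; (II) for every subgroup $K$ with $H\le K\le G$, if $[K:H]>\theta$ then there exists $k\in K$ with $\operatorname{diam}(kA\cap Y)\le\theta$.
   Context: A path is a rectifiable continuous map $\alpha\colon[a,b]\to X$ parametrised by arc length; it is a $(\kappa,\lambda)$-quasi-geodesic if $d(\alpha(t),\alpha(t'))\le|t-t'|\le\kappa d(\alpha(t),\alpha(t'))+\lambda$. A $(\mu,\nu)$-path system on a geodesic metric space $X$ is a collection $\Gamma$ of paths closed under subpaths, such that any two points are joined by an element of $\Gamma$ and every element is a $(\mu,\nu)$-quasi-geodesic. A $(\mu,\nu)$-path system group $(G,X,\Gamma)$ is a group $G$ acting properly by isometries on a geodesic metric space $X$ (balls $B_G(x,r)=\{g: d(x,gx)\le r\}$ finite) with $\Gamma$ a $G$-invariant $(\mu,\nu)$-path system. $Y^{+\eta}=\{x: d(x,Y)\le\eta\}$. A subset $Y$ is $\eta$-quasi-convex if every $\gamma\in\Gamma$ with endpoints in $Y$ lies in $Y^{+\eta}$. A subgroup $H$ is $\eta$-quasi-convex, written $(H,Y)$, if $Y\subseteq X$ is an $H$-invariant $\eta$-quasi-convex subset on which $H$ acts $\eta$-coboundedly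 (for all $y,y'\in Y$ some $h\in H$ has $d(y,hy')\le\eta$). An element $g\in G$ is $\eta$-quasi-convex, written $(g,A)$, if $g$ has infinite order and $(\langle g\rangle,A)$ is an $\eta$-quasi-convex subgroup. The diameter of the empty set is $0$. *)

theory Defs
  imports "HOL-Analysis.Analysis" "HOL-Algebra.Group_Action" "HOL-Algebra.Generated_Groups"
    "HOL-Algebra.Multiplicative_Group"
begin

definition geodesic_space :: "'x::metric_space itself \<Rightarrow> bool" where
  "geodesic_space _ \<longleftrightarrow> (\<forall>x y::'x. \<exists>\<gamma>::real \<Rightarrow> 'x. \<gamma> 0 = x \<and> \<gamma> (dist x y) = y \<and>
      (\<forall>s\<in>{0..dist x y}. \<forall>t\<in>{0..dist x y}. dist (\<gamma> s) (\<gamma> t) = \<bar>s - t\<bar>))"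

definition partition_sums :: "(real \<Rightarrow> 'x::metric_space) \<Rightarrow> real \<Rightarrow> real \<Rightarrow> real set" where
  "partition_sums \<alpha> s t = {(\<Sum>i<n. dist (\<alpha> (p i)) (\<alpha> (p (Suc i)))) | p n.
      p 0 = s \<and> p n = t \<and> (\<forall>i<n. p i \<le> p (Suc i))}"

definition has_curve_length :: "(real \<Rightarrow> 'x::metric_space) \<Rightarrow> real \<Rightarrow> real \<Rightarrow> real \<Rightarrow> bool" where
  "has_curve_length \<alpha> s t L \<longleftrightarrow> (\<forall>v\<in>partition_sums \<alpha> s t. v \<le> L) \<and>
      (\<forall>e>0. \<exists>v\<in>partition_sums \<alpha> s t. L - e < v)"

text \<open>A path is a triple (a,b,alpha): a rectifiable continuous map on [a,b], parametrised by arc length.\<close>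
type_synonym 'x path = "real \<times> real \<times> (real \<Rightarrow> 'x)"

definition is_path :: "'x::metric_space path \<Rightarrow> bool" where
  "is_path p \<longleftrightarrow> (case p of (a, b, \<alpha>) \<Rightarrow> a \<le> b \<and> continuous_on {a..b} \<alpha> \<and>
      (\<forall>s t. a \<le> s \<and> s \<le> t \<and> t \<le> b \<longrightarrow> has_curve_length \<alpha> s t (t - s)))"

definition quasi_geodesic :: "real \<Rightarrow> real \<Rightarrow> 'x::metric_space path \<Rightarrow> bool" where
  "quasi_geodesic k l p \<longleftrightarrow> is_path p \<and> (case p of (a, b, \<alpha>) \<Rightarrow>
      (\<forall>t\<in>{a..b}. \<forall>t'\<in>{a..b}. dist (\<alpha> t) (\<alpha> t') \<le> \<bar>t - t'\<bar> \<and>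
          \<bar>t - t'\<bar> \<le> k * dist (\<alpha> t) (\<alpha> t') + l))"

definition path_system :: "real \<Rightarrow> real \<Rightarrow> 'x::metric_space path set \<Rightarrow> bool" where
  "path_system \<mu> \<nu> \<Gamma> \<longleftrightarrow>
     (\<forall>(a, b, \<alpha>)\<in>\<Gamma>. \<forall>s t. a \<le> s \<and> s \<le> t \<and> t \<le> b \<longrightarrow> (s, t, \<alpha>) \<in> \<Gamma>) \<and>
     (\<forall>x y. \<exists>(a, b, \<alpha>)\<in>\<Gamma>. \<alpha> a = x \<and> \<alpha> b = y) \<and>
     (\<forall>p\<in>\<Gamma>. quasi_geodesic \<mu> \<nu> p)"

definition nbhd :: "'x::metric_space set \<Rightarrow> real \<Rightarrow> 'x set" where
  "nbhd Y \<eta> = {x. Y \<noteq> {} \<and> infdist x Y \<le> \<eta>}"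

definition ediam :: "'x::metric_space set \<Rightarrow> ereal" where
  "ediam S = (if S = {} then 0 else (SUP x\<in>S. SUP y\<in>S. ereal (dist x y)))"

definition subgroup_index :: "('g, 'b) monoid_scheme \<Rightarrow> 'g set \<Rightarrow> 'g set \<Rightarrow> ereal" where
  "subgroup_index G K H = (let C = (\<lambda>k. H #>\<^bsub>G\<^esub> k) ` K in
      if finite C then ereal (real (card C)) else \<infinity>)"

definition path_system_group ::
  "real \<Rightarrow> real \<Rightarrow> ('g, 'b) monoid_scheme \<Rightarrow> ('g \<Rightarrow> 'x::metric_space \<Rightarrow> 'x) \<Rightarrow> 'x path set \<Rightarrow> bool" where
  "path_system_group \<mu> \<nu> G \<phi> \<Gamma> \<longleftrightarrow>
     group G \<and> geodesic_space TYPE('x) \<and>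
     group_action G UNIV \<phi> \<and>
     (\<forall>g\<in>carrier G. \<forall>x y. dist (\<phi> g x) (\<phi> g y) = dist x y) \<and>
     (\<forall>x r. finite {g\<in>carrier G. dist x (\<phi> g x) \<le> r}) \<and>
     path_system \<mu> \<nu> \<Gamma> \<and>
     (\<forall>g\<in>carrier G. \<forall>(a, b, \<alpha>)\<in>\<Gamma>. (a, b, \<phi> g \<circ> \<alpha>) \<in> \<Gamma>)"

definition quasi_convex_set :: "'x::metric_space path set \<Rightarrow> real \<Rightarrow> 'x set \<Rightarrow> bool" where
  "quasi_convex_set \<Gamma> \<eta> Y \<longleftrightarrow>
     (\<forall>(a, b, \<alpha>)\<in>\<Gamma>. \<alpha> a \<in> Y \<and> \<alpha> b \<in> Y \<longrightarrow> \<alpha> ` {a..b} \<subseteq> nbhd Y \<eta>)"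

definition quasi_convex_subgroup ::
  "('g, 'b) monoid_scheme \<Rightarrow> ('g \<Rightarrow> 'x::metric_space \<Rightarrow> 'x) \<Rightarrow> 'x path set \<Rightarrow> real \<Rightarrow> 'g set \<Rightarrow> 'x set \<Rightarrow> bool" where
  "quasi_convex_subgroup G \<phi> \<Gamma> \<eta> H Y \<longleftrightarrow>
     subgroup H G \<and>
     (\<forall>h\<in>H. \<phi> h ` Y \<subseteq> Y) \<and>
     quasi_convex_set \<Gamma> \<eta> Y \<and>
     (\<forall>y\<in>Y. \<forall>y'\<in>Y. \<exists>h\<in>H. dist y (\<phi> h y') \<le> \<eta>)"

definition quasi_convex_element ::
  "('g, 'b) monoid_scheme \<Rightarrow> ('g \<Rightarrow> 'x::metric_space \<Rightarrow> 'x) \<Rightarrow> 'x path set \<Rightarrow> real \<Rightarrow> 'g \<Rightarrow> 'x set \<Rightarrow> bool" where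
  "quasi_convex_element G \<phi> \<Gamma> \<eta> g A \<longleftrightarrow>
     g \<in> carrier G \<and> group.ord G g = 0 \<and>
     quasi_convex_subgroup G \<phi> \<Gamma> \<eta> (generate G {g}) A"

end

theory Submission
  imports Defs
begin

text \<open>
  (I) If \<open>uA \<inter> Y\<close> contains two far-apart points, a path of \<open>\<Gamma>\<close> joining them fellow-travels both
  the quasi-line \<open>uA\<close> (coarsely the orbit \<open>u g\<^sup>k a\<^sub>0\<close>) and the \<open>H\<close>-orbit of one of them.
  Sampling it at more well-separated points than there are group elements of bounded
  displacement at \<open>a\<^sub>0\<close>, properness and the pigeonhole principle give \<open>z \<in> H\<close> with
  \<open>z u = u g\<^sup>m\<close>, where \<open>m \<noteq> 0\<close> (the samples are far apart along a quasi-geodesic) and \<open>|m|\<close> is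
  bounded (they are close along it). So \<open>H\<close> translates \<open>uA\<close> along itself by a bounded step,
  and the \<open>H\<close>-invariance of \<open>Y\<close> propagates the closeness of one window of \<open>uA\<close> to all of it.

  (II) If every \<open>kA\<close>, \<open>k \<in> K\<close>, lies near \<open>Y\<close>, then coboundedness of \<open>H\<close> on \<open>Y\<close> gives every
  coset \<open>Hk\<close> a representative of bounded displacement at \<open>a\<^sub>0\<close>; properness bounds their number.
\<close>

lemma nbhd_intro: "y \<in> Y \<Longrightarrow> dist x y \<le> e \<Longrightarrow> x \<in> nbhd Y e"
  unfolding nbhd_def using infdist_le2 by blast

lemma nbhd_mono: "e \<le> e' \<Longrightarrow> nbhd Y e \<subseteq> nbhd Y e'"
  unfolding nbhd_def by auto

text \<open>The slack \<open>+ 1\<close> is needed since \<open>infdist\<close> need not be attained.\<close>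

lemma nbhd_nearE:
  assumes "x \<in> nbhd Y e"
  obtains y where "y \<in> Y" "dist x y < e + 1"
proof -
  from assms have ne: "Y \<noteq> {}" and "infdist x Y < e + 1" by (auto simp: nbhd_def)
  then have "(INF y\<in>Y. dist x y) < e + 1" by (simp add: infdist_notempty)
  then show ?thesis using that ne by (auto simp: cINF_less_iff)
qed

lemma ediam_gtE:
  assumes "ereal c < ediam S" "c \<ge> 0"
  obtains x y where "x \<in> S" "y \<in> S" "c < dist x y"
proof -
  have "S \<noteq> {}" using assms by (auto simp: ediam_def)
  then have "ereal c < (SUP x\<in>S. SUP y\<in>S. ereal (dist x y))" using assms by (simp add: ediam_def)
  then show ?thesis using that by (auto simp: less_SUP_iff)
qed

lemma subgroup_index_le_card:
  assumes "finite F" and reps: "\<And>k. k \<in> K \<Longrightarrow> \<exists>f\<in>F. H #>\<^bsub>G\<^esub> k = H #>\<^bsub>G\<^esub> f"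
  shows "subgroup_index G K H \<le> ereal (card F)"
proof -
  have sub: "(\<lambda>k. H #>\<^bsub>G\<^esub> k) ` K \<subseteq> (\<lambda>f. H #>\<^bsub>G\<^esub> f) ` F" using reps by fastforce
  then have "finite ((\<lambda>k. H #>\<^bsub>G\<^esub> k) ` K)" using assms(1) finite_subset by blast
  moreover have "card ((\<lambda>k. H #>\<^bsub>G\<^esub> k) ` K) \<le> card F"
    using card_mono[OF finite_imageI[OF assms(1)] sub] card_image_le[OF assms(1), of "\<lambda>f. H #>\<^bsub>G\<^esub> f"]
    by linarith
  ultimately show ?thesis by (simp add: subgroup_index_def)
qed

lemma int_periodic_set_covers:
  fixes S :: "int set"
  assumes "m \<noteq> 0" and periodic: "\<And>n. n \<in> S \<longleftrightarrow> n + m \<in> S"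
    and window: "\<And>r. \<bar>r\<bar> < \<bar>m\<bar> \<Longrightarrow> c + r \<in> S"
  shows "n \<in> S"
proof -
  have shifted: "c + r + q * m \<in> S" if "\<bar>r\<bar> < \<bar>m\<bar>" for r q
  proof (induction q rule: int_induct[where k = 0])
    case base
    then show ?case using window[OF that] by simp
  next
    case (step1 q)
    then show ?case using periodic[of "c + r + q * m"] by (simp add: algebra_simps)
  next
    case (step2 q)
    then show ?case using periodic[of "c + r + (q - 1) * m"] by (simp add: algebra_simps)
  qed
  have "\<bar>(n - c) mod m\<bar> < \<bar>m\<bar>" using assms(1) abs_mod_less by blast
  then have "c + (n - c) mod m + (n - c) div m * m \<in> S" by (rule shifted)
  moreover have "c + (n - c) mod m + (n - c) div m * m = n"
    using div_mult_mod_eq[of "n - c" m] by linarith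
  ultimately show ?thesis by simp
qed

lemma quasi_geodesic_near_points:
  assumes qg: "quasi_geodesic \<mu> \<nu> (a, b, \<alpha>)" and t: "t \<in> {a..b}" "t' \<in> {a..b}"
    and p: "dist (\<alpha> t) p < C" and q: "dist (\<alpha> t') q < C"
  shows "\<bar>t - t'\<bar> \<le> \<bar>\<mu>\<bar> * (dist p q + 2 * C) + \<bar>\<nu>\<bar>" and "dist p q < \<bar>t - t'\<bar> + 2 * C"
proof -
  have up: "dist (\<alpha> t) (\<alpha> t') \<le> \<bar>t - t'\<bar>" and low: "\<bar>t - t'\<bar> \<le> \<mu> * dist (\<alpha> t) (\<alpha> t') + \<nu>"
    using qg t unfolding quasi_geodesic_def by auto
  have "dist (\<alpha> t) (\<alpha> t') < dist p q + 2 * C"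
    using dist_triangle[of "\<alpha> t" "\<alpha> t'" p] dist_triangle[of p "\<alpha> t'" q] p q
    by (simp add: dist_commute)
  then have "\<mu> * dist (\<alpha> t) (\<alpha> t') \<le> \<bar>\<mu>\<bar> * (dist p q + 2 * C)"
    by (metis abs_ge_self abs_ge_zero less_imp_le mult_mono zero_le_dist)
  then show "\<bar>t - t'\<bar> \<le> \<bar>\<mu>\<bar> * (dist p q + 2 * C) + \<bar>\<nu>\<bar>" using low by linarith
  show "dist p q < \<bar>t - t'\<bar> + 2 * C"
    using dist_triangle[of p q "\<alpha> t"] dist_triangle[of "\<alpha> t" q "\<alpha> t'"] up p q
    by (simp add: dist_commute)
qed

lemma (in group) inv_mult_eq_imp_conj_eq:
  assumes "a \<in> carrier G" "b \<in> carrier G" "c \<in> carrier G" "x \<in> carrier G" "y \<in> carrier G"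
    and "inv a \<otimes> (c \<otimes> x) = inv b \<otimes> (c \<otimes> y)"
  shows "b \<otimes> inv a \<otimes> c = c \<otimes> (y \<otimes> inv x)"
proof -
  have "c \<otimes> y = b \<otimes> (inv a \<otimes> (c \<otimes> x))"
    using assms inv_solve_left'[of "inv a \<otimes> (c \<otimes> x)" b "c \<otimes> y"] by simp
  then have "c \<otimes> y = b \<otimes> inv a \<otimes> c \<otimes> x" using assms by (simp add: m_assoc)
  then have "b \<otimes> inv a \<otimes> c = c \<otimes> y \<otimes> inv x"
    using assms inv_solve_right[of "b \<otimes> inv a \<otimes> c" "c \<otimes> y" x] by simp
  then show ?thesis using assms by (simp add: m_assoc)
qed

locale path_system_group_setting =
  fixes \<mu> \<nu> :: real and G :: "('g, 'b) monoid_scheme" (structure)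
    and \<phi> :: "'g \<Rightarrow> 'x::metric_space \<Rightarrow> 'x" and \<Gamma> :: "'x path set"
  assumes psg: "path_system_group \<mu> \<nu> G \<phi> \<Gamma>"
begin

sublocale group G
  using psg by (simp add: path_system_group_def)

lemma action: "group_action G UNIV \<phi>"
  using psg by (simp add: path_system_group_def)

lemma act_mult: "a \<in> carrier G \<Longrightarrow> b \<in> carrier G \<Longrightarrow> \<phi> (a \<otimes> b) x = \<phi> a (\<phi> b x)"
  using group_action.composition_rule[OF action] by blast

lemma act_one [simp]: "\<phi> \<one> x = x"
  using group_action.id_eq_one[OF action] by (metis UNIV_I restrict_apply')

lemma act_inv_act [simp]: "a \<in> carrier G \<Longrightarrow> \<phi> (inv a) (\<phi> a x) = x"
  using act_mult[of "inv a" a x] by simp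

lemma act_act_inv [simp]: "a \<in> carrier G \<Longrightarrow> \<phi> a (\<phi> (inv a) x) = x"
  using act_mult[of a "inv a" x] by simp

lemma dist_act [simp]: "a \<in> carrier G \<Longrightarrow> dist (\<phi> a x) (\<phi> a y) = dist x y"
  using psg by (simp add: path_system_group_def)

lemma dist_act_inv: "a \<in> carrier G \<Longrightarrow> dist x (\<phi> (inv a) y) = dist (\<phi> a x) y"
  using dist_act[of a x "\<phi> (inv a) y"] by simp

lemma finite_displacement: "finite {f \<in> carrier G. dist x (\<phi> f x) \<le> r}"
  using psg by (simp add: path_system_group_def)

lemma path_system: "path_system \<mu> \<nu> \<Gamma>"
  using psg by (simp add: path_system_group_def)

lemma act_path: "a \<in> carrier G \<Longrightarrow> (s, t, \<alpha>) \<in> \<Gamma> \<Longrightarrow> (s, t, \<phi> a \<circ> \<alpha>) \<in> \<Gamma>"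
  using psg unfolding path_system_group_def by blast

lemma joining_path:
  obtains a b \<alpha> where "(a, b, \<alpha>) \<in> \<Gamma>" "\<alpha> a = x" "\<alpha> b = y"
    "quasi_geodesic \<mu> \<nu> (a, b, \<alpha>)" "dist x y \<le> b - a"
proof -
  have "\<exists>(a, b, \<alpha>)\<in>\<Gamma>. \<alpha> a = x \<and> \<alpha> b = y" using path_system unfolding path_system_def by blast
  then obtain a b \<alpha> where \<alpha>: "(a, b, \<alpha>) \<in> \<Gamma>" "\<alpha> a = x" "\<alpha> b = y" by auto
  have qg: "quasi_geodesic \<mu> \<nu> (a, b, \<alpha>)" using path_system \<alpha>(1) unfolding path_system_def by blast
  then have "a \<le> b" unfolding quasi_geodesic_def is_path_def by simp
  have "dist (\<alpha> t) (\<alpha> t') \<le> \<bar>t - t'\<bar>" if "t \<in> {a..b}" "t' \<in> {a..b}" for t t'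
    using qg that unfolding quasi_geodesic_def by auto
  from this[of a b] have "dist x y \<le> b - a" using \<alpha>(2,3) \<open>a \<le> b\<close> by simp
  with \<alpha> qg show thesis by (rule that)
qed

lemma displacement_pigeonhole:
  assumes w: "w \<in> carrier G" and e: "\<And>i. i \<le> N \<Longrightarrow> e i \<in> carrier G"
    and near: "\<And>i. i \<le> N \<Longrightarrow> dist (\<phi> w x) (\<phi> (e i) x) \<le> R"
    and N: "card {f \<in> carrier G. dist x (\<phi> f x) \<le> R} \<le> N"
  obtains i j where "i \<le> N" "j \<le> N" "i \<noteq> j" "e i = e j"
proof -
  let ?F = "{f \<in> carrier G. dist x (\<phi> f x) \<le> R}"
  have into: "inv w \<otimes> e i \<in> ?F" if "i \<le> N" for i
    using e[OF that] near[OF that] w by (simp add: act_mult dist_act_inv)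
  have "\<not> inj_on (\<lambda>i. inv w \<otimes> e i) {..N}"
  proof
    assume "inj_on (\<lambda>i. inv w \<otimes> e i) {..N}"
    then have "card {..N} \<le> card ?F"
      using card_inj_on_le[OF _ _ finite_displacement] into by blast
    then show False using N by simp
  qed
  then obtain i j where ij: "i \<le> N" "j \<le> N" "i \<noteq> j"
    and eq: "inv w \<otimes> e i = inv w \<otimes> e j"
    unfolding inj_on_def by auto
  have cancel: "e k = w \<otimes> (inv w \<otimes> e k)" if "k \<le> N" for k
    using inv_solve_left[OF m_closed[OF inv_closed[OF w] e[OF that]] w e[OF that]] by blast
  have "e i = w \<otimes> (inv w \<otimes> e i)" by (rule cancel[OF ij(1)])
  also have "\<dots> = w \<otimes> (inv w \<otimes> e j)" by (simp only: eq)
  also have "\<dots> = e j" using cancel[OF ij(2)] by (rule sym)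
  finally show ?thesis using that ij by blast
qed

lemma near_set_act_iff:
  assumes H: "subgroup H G" and Y: "\<forall>h\<in>H. \<phi> h ` Y \<subseteq> Y" and h: "h \<in> H"
  shows "(\<exists>y\<in>Y. dist (\<phi> h x) y \<le> e) \<longleftrightarrow> (\<exists>y\<in>Y. dist x y \<le> e)"
proof -
  have hc: "h \<in> carrier G" using H h subgroup.subset by blast
  show ?thesis
  proof
    assume "\<exists>y\<in>Y. dist (\<phi> h x) y \<le> e"
    then obtain y where "y \<in> Y" "dist (\<phi> h x) y \<le> e" by blast
    have "\<phi> (inv h) y \<in> Y" using Y subgroup.m_inv_closed[OF H h] \<open>y \<in> Y\<close> by blast
    moreover have "dist x (\<phi> (inv h) y) \<le> e"
      using dist_act_inv[OF hc, of x y] \<open>dist (\<phi> h x) y \<le> e\<close> by simp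
    ultimately show "\<exists>y\<in>Y. dist x y \<le> e" by blast
  next
    assume "\<exists>y\<in>Y. dist x y \<le> e"
    then obtain y where "y \<in> Y" "dist x y \<le> e" by blast
    moreover have "\<phi> h y \<in> Y" using Y h \<open>y \<in> Y\<close> by blast
    ultimately show "\<exists>y\<in>Y. dist (\<phi> h x) y \<le> e" using hc by (intro bexI[of _ "\<phi> h y"]) simp_all
  qed
qed

lemma quasi_convex_subgroup_near_orbit:
  assumes qY: "quasi_convex_subgroup G \<phi> \<Gamma> \<eta> H Y" and x: "x \<in> nbhd Y e" and "y0 \<in> Y"
  obtains h where "h \<in> H" "dist x (\<phi> h y0) < e + 1 + \<eta>"
proof -
  obtain y where "y \<in> Y" "dist x y < e + 1" using x by (rule nbhd_nearE)
  moreover obtain h where "h \<in> H" "dist y (\<phi> h y0) \<le> \<eta>"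
    using qY \<open>y \<in> Y\<close> \<open>y0 \<in> Y\<close> unfolding quasi_convex_subgroup_def by blast
  ultimately show ?thesis using that dist_triangle[of x "\<phi> h y0" y] by fastforce
qed

lemma quasi_convex_subgroup_path_near_orbit:
  assumes qY: "quasi_convex_subgroup G \<phi> \<Gamma> \<eta> H Y" and u: "u \<in> carrier G"
    and \<alpha>: "(a, b, \<alpha>) \<in> \<Gamma>" "\<alpha> a \<in> \<phi> u ` Y" "\<alpha> b \<in> \<phi> u ` Y"
    and "y0 \<in> Y" and t: "t \<in> {a..b}"
  obtains h where "h \<in> H" "dist (\<alpha> t) (\<phi> u (\<phi> h y0)) < 2 * \<eta> + 1"
proof -
  let ?\<beta> = "\<phi> (inv u) \<circ> \<alpha>"
  have "(a, b, ?\<beta>) \<in> \<Gamma>" using act_path[OF inv_closed[OF u] \<alpha>(1)] .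
  moreover have "?\<beta> a \<in> Y" "?\<beta> b \<in> Y" using \<alpha>(2,3) u by auto
  ultimately have "?\<beta> t \<in> nbhd Y \<eta>"
    using qY t unfolding quasi_convex_subgroup_def quasi_convex_set_def by fastforce
  then obtain h where "h \<in> H" "dist (?\<beta> t) (\<phi> h y0) < \<eta> + 1 + \<eta>"
    using qY \<open>y0 \<in> Y\<close> quasi_convex_subgroup_near_orbit by blast
  moreover have "dist (\<alpha> t) (\<phi> u (\<phi> h y0)) = dist (?\<beta> t) (\<phi> h y0)"
    using dist_act_inv[OF u, of "\<phi> h y0" "\<alpha> t"] by (simp add: dist_commute)
  ultimately show ?thesis using that by auto
qed

end

locale quasi_convex_element_orbit = path_system_group_setting +
  fixes \<eta> :: real and g and A and a0
  assumes eta_nonneg: "0 \<le> \<eta>" and qce: "quasi_convex_element G \<phi> \<Gamma> \<eta> g A" and a0: "a0 \<in> A"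
begin

definition axis where
  "axis (k::int) = \<phi> (g [^] k) a0"

lemma g_carrier: "g \<in> carrier G"
  using qce by (simp add: quasi_convex_element_def)

lemma pow_carrier [simp]: "g [^] (k::int) \<in> carrier G"
  using g_carrier by simp

lemma A_quasi_convex: "quasi_convex_subgroup G \<phi> \<Gamma> \<eta> (range (\<lambda>k::int. g [^] k)) A"
proof -
  have "generate G {g} = range (\<lambda>k::int. g [^] k)" using generate_pow[OF g_carrier] by auto
  then show ?thesis using qce by (simp add: quasi_convex_element_def)
qed

lemma pow_inj: "inj (\<lambda>k::int. g [^] k)"
  using qce int_pow_eq[OF g_carrier] by (auto intro!: injI simp: quasi_convex_element_def)

lemma act_pow_axis: "\<phi> (g [^] m) (axis k) = axis (m + k)"
  unfolding axis_def using g_carrier by (simp add: act_mult[symmetric] int_pow_mult)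

lemma dist_axis_shift: "dist (axis k) (axis (k + r)) = dist a0 (axis r)"
proof -
  have "dist (axis k) (axis (k + r)) = dist (\<phi> (g [^] k) (axis 0)) (\<phi> (g [^] k) (axis r))"
    by (simp add: act_pow_axis)
  then show ?thesis by (simp add: axis_def)
qed

lemma A_near_axis:
  assumes "y \<in> A"
  obtains k where "dist y (axis k) \<le> \<eta>"
  using A_quasi_convex assms a0 unfolding quasi_convex_subgroup_def axis_def by blast

definition axis_bound :: "real \<Rightarrow> int" where
  "axis_bound R = Max (insert 0 (abs ` {k. dist a0 (axis k) \<le> R}))"

lemma abs_le_axis_bound:
  assumes "dist a0 (axis k) \<le> R"
  shows "\<bar>k\<bar> \<le> axis_bound R"
proof -
  have "{k. dist a0 (axis k) \<le> R} \<subseteq> (\<lambda>k. g [^] k) -` {f \<in> carrier G. dist a0 (\<phi> f a0) \<le> R}"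
    by (auto simp: axis_def)
  then have "finite {k. dist a0 (axis k) \<le> R}"
    using finite_vimageI[OF finite_displacement pow_inj] finite_subset by blast
  then show ?thesis unfolding axis_bound_def using assms by (auto intro: Max_ge)
qed

text \<open>
  Path samples spaced \<open>sample_step\<close> apart are, by the quasi-geodesic lower bound, too far apart
  to lie within \<open>track_dist\<close> of a common point. There are \<open>sample_count + 1\<close> samples but only
  \<open>sample_count\<close> group elements of the displacement the pigeonhole argument produces.
\<close>

definition track_dist :: real where
  "track_dist = 2 * \<eta> + 1"

definition sample_step :: real where
  "sample_step = \<bar>\<mu>\<bar> * (2 * track_dist) + \<bar>\<nu>\<bar> + 1"

definition sample_count :: nat where
  "sample_count = card {f \<in> carrier G. dist a0 (\<phi> f a0) \<le> 2 * track_dist + \<eta>}"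

definition shift_bound :: int where
  "shift_bound = axis_bound (2 * track_dist + sample_count * sample_step)"

lemma track_dist_pos: "0 < track_dist"
  using eta_nonneg by (simp add: track_dist_def)

lemma sample_step_pos: "0 < sample_step"
  using track_dist_pos by (simp add: sample_step_def add_nonneg_pos)

lemma axis_samples_spread:
  assumes qg: "quasi_geodesic \<mu> \<nu> (a, b, \<alpha>)" and u: "u \<in> carrier G"
    and ij: "i \<le> sample_count" "j \<le> sample_count" "i \<noteq> j"
    and t: "a + i * sample_step \<in> {a..b}" "a + j * sample_step \<in> {a..b}"
    and near: "dist (\<alpha> (a + i * sample_step)) (\<phi> u (axis ki)) < track_dist"
      "dist (\<alpha> (a + j * sample_step)) (\<phi> u (axis kj)) < track_dist"
  shows "ki \<noteq> kj" and "\<bar>kj - ki\<bar> \<le> shift_bound"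
proof -
  let ?p = "\<phi> u (axis ki)" and ?q = "\<phi> u (axis kj)"
  have "(a + i * sample_step) - (a + j * sample_step) = (real i - real j) * sample_step"
    by (simp add: algebra_simps)
  then have gap: "\<bar>(a + i * sample_step) - (a + j * sample_step)\<bar> = \<bar>real i - real j\<bar> * sample_step"
    using sample_step_pos by (simp add: abs_mult)
  have "1 \<le> \<bar>real i - real j\<bar>" using ij(3) by linarith
  then have "sample_step \<le> \<bar>real i - real j\<bar> * sample_step"
    using sample_step_pos by (simp add: mult_le_cancel_right1)
  moreover have "\<bar>real i - real j\<bar> * sample_step \<le> \<bar>\<mu>\<bar> * (dist ?p ?q + 2 * track_dist) + \<bar>\<nu>\<bar>"
    using quasi_geodesic_near_points(1)[OF qg t near] gap by simp
  ultimately have "sample_step \<le> \<bar>\<mu>\<bar> * (dist ?p ?q + 2 * track_dist) + \<bar>\<nu>\<bar>"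
    by (rule order_trans)
  then show "ki \<noteq> kj" unfolding sample_step_def by auto
  have "\<bar>real i - real j\<bar> \<le> sample_count" using ij by linarith
  then have "\<bar>real i - real j\<bar> * sample_step \<le> sample_count * sample_step"
    using sample_step_pos by (simp add: mult_right_mono)
  moreover have "dist ?p ?q < \<bar>real i - real j\<bar> * sample_step + 2 * track_dist"
    using quasi_geodesic_near_points(2)[OF qg t near] gap by simp
  moreover have "dist ?p ?q = dist a0 (axis (kj - ki))"
    using u dist_axis_shift[of ki "kj - ki"] by simp
  ultimately show "\<bar>kj - ki\<bar> \<le> shift_bound"
    unfolding shift_bound_def by (intro abs_le_axis_bound) linarith
qed

lemma far_pair_axis_samples:
  assumes qY: "quasi_convex_subgroup G \<phi> \<Gamma> \<eta> H Y" and u: "u \<in> carrier G"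
    and x1: "x1 \<in> \<phi> u ` A \<inter> Y" and x2: "x2 \<in> \<phi> u ` A \<inter> Y"
    and far: "sample_count * sample_step < dist x1 x2"
  obtains k h where
    "\<And>i. i \<le> sample_count \<Longrightarrow> h i \<in> H"
    "\<And>i. i \<le> sample_count \<Longrightarrow> dist (\<phi> (h i) x1) (\<phi> u (axis (k i))) < 2 * track_dist"
    "\<And>i j. i \<le> sample_count \<Longrightarrow> j \<le> sample_count \<Longrightarrow> i \<noteq> j \<Longrightarrow> k i \<noteq> k j \<and> \<bar>k j - k i\<bar> \<le> shift_bound"
proof -
  obtain a b \<alpha> where \<alpha>: "(a, b, \<alpha>) \<in> \<Gamma>" "\<alpha> a = x1" "\<alpha> b = x2"
    and qg: "quasi_geodesic \<mu> \<nu> (a, b, \<alpha>)" and "dist x1 x2 \<le> b - a"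
    by (rule joining_path)
  define t where "t i = a + real i * sample_step" for i
  have t: "t i \<in> {a..b}" if "i \<le> sample_count" for i
  proof -
    have "0 \<le> real i * sample_step" "real i * sample_step \<le> sample_count * sample_step"
      using that sample_step_pos by (simp_all add: mult_right_mono)
    then show ?thesis using far \<open>dist x1 x2 \<le> b - a\<close> unfolding t_def by simp
  qed
  have ends_A: "\<alpha> a \<in> \<phi> u ` A" "\<alpha> b \<in> \<phi> u ` A" using x1 x2 \<alpha> by auto
  have "\<forall>i\<in>{..sample_count}. \<exists>k. dist (\<alpha> (t i)) (\<phi> u (axis k)) < track_dist"
  proof
    fix i assume "i \<in> {..sample_count}"
    then obtain f where "f \<in> range (\<lambda>k::int. g [^] k)" "dist (\<alpha> (t i)) (\<phi> u (\<phi> f a0)) < 2 * \<eta> + 1"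
      using quasi_convex_subgroup_path_near_orbit[OF A_quasi_convex u \<alpha>(1) ends_A a0 t] by auto
    then show "\<exists>k. dist (\<alpha> (t i)) (\<phi> u (axis k)) < track_dist"
      by (auto simp: axis_def track_dist_def)
  qed
  from bchoice[OF this] obtain k
    where k: "\<forall>i\<in>{..sample_count}. dist (\<alpha> (t i)) (\<phi> u (axis (k i))) < track_dist" ..
  have ends_Y: "\<alpha> a \<in> \<phi> \<one> ` Y" "\<alpha> b \<in> \<phi> \<one> ` Y"
    using x1 x2 \<alpha> by (auto intro: rev_image_eqI)
  have "\<forall>i\<in>{..sample_count}. \<exists>h. h \<in> H \<and> dist (\<alpha> (t i)) (\<phi> h x1) < track_dist"
  proof
    fix i assume "i \<in> {..sample_count}"
    then obtain h where "h \<in> H" "dist (\<alpha> (t i)) (\<phi> \<one> (\<phi> h x1)) < 2 * \<eta> + 1"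
      using quasi_convex_subgroup_path_near_orbit[OF qY one_closed \<alpha>(1) ends_Y _ t] x1 by auto
    then show "\<exists>h. h \<in> H \<and> dist (\<alpha> (t i)) (\<phi> h x1) < track_dist"
      by (auto simp: track_dist_def)
  qed
  from bchoice[OF this] obtain h
    where h: "\<forall>i\<in>{..sample_count}. h i \<in> H \<and> dist (\<alpha> (t i)) (\<phi> (h i) x1) < track_dist" ..
  show thesis
  proof (rule that)
    fix i assume "i \<le> sample_count"
    then show "h i \<in> H" using h by simp
    have "dist (\<alpha> (t i)) (\<phi> (h i) x1) < track_dist" "dist (\<alpha> (t i)) (\<phi> u (axis (k i))) < track_dist"
      using h k \<open>i \<le> sample_count\<close> by auto
    then show "dist (\<phi> (h i) x1) (\<phi> u (axis (k i))) < 2 * track_dist"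
      using dist_triangle[of "\<phi> (h i) x1" "\<phi> u (axis (k i))" "\<alpha> (t i)"] by (simp add: dist_commute)
  next
    fix i j assume ij: "i \<le> sample_count" "j \<le> sample_count" "i \<noteq> j"
    then show "k i \<noteq> k j \<and> \<bar>k j - k i\<bar> \<le> shift_bound"
      using axis_samples_spread[OF qg u ij] t[OF ij(1)] t[OF ij(2)] k ij unfolding t_def by simp
  qed
qed

lemma far_pair_shift:
  assumes qY: "quasi_convex_subgroup G \<phi> \<Gamma> \<eta> H Y" and u: "u \<in> carrier G"
    and x1: "x1 \<in> \<phi> u ` A \<inter> Y" and x2: "x2 \<in> \<phi> u ` A \<inter> Y"
    and far: "sample_count * sample_step < dist x1 x2"
  obtains z m where "z \<in> H" "z \<otimes> u = u \<otimes> g [^] m" "m \<noteq> 0" "\<bar>m\<bar> \<le> shift_bound"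
proof -
  obtain h k where h: "\<And>i. i \<le> sample_count \<Longrightarrow> h i \<in> H"
    and near: "\<And>i. i \<le> sample_count \<Longrightarrow> dist (\<phi> (h i) x1) (\<phi> u (axis (k i))) < 2 * track_dist"
    and spread: "\<And>i j. i \<le> sample_count \<Longrightarrow> j \<le> sample_count \<Longrightarrow> i \<noteq> j \<Longrightarrow>
      k i \<noteq> k j \<and> \<bar>k j - k i\<bar> \<le> shift_bound"
    by (rule far_pair_axis_samples[OF assms], rule that)
  have H: "subgroup H G" using qY unfolding quasi_convex_subgroup_def by blast
  have hc: "h i \<in> carrier G" if "i \<le> sample_count" for i using subgroup.subset[OF H] h[OF that] by blast
  obtain a1 where a1: "a1 \<in> A" "x1 = \<phi> u a1" using x1 by blast
  obtain k0 where k0: "dist a1 (axis k0) \<le> \<eta>" using A_near_axis[OF a1(1)] .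
  define e where "e i = inv (h i) \<otimes> (u \<otimes> g [^] k i)" for i
  have e_near: "dist (\<phi> (u \<otimes> g [^] k0) a0) (\<phi> (e i) a0) \<le> 2 * track_dist + \<eta>" if i: "i \<le> sample_count" for i
  proof -
    let ?y = "\<phi> (h i) (\<phi> u (axis k0))"
    have "dist (\<phi> (u \<otimes> g [^] k0) a0) (\<phi> (e i) a0) = dist ?y (\<phi> u (axis (k i)))"
      using hc[OF i] u by (simp add: e_def act_mult axis_def dist_act_inv)
    moreover have "dist ?y (\<phi> u (axis (k i))) \<le> dist ?y (\<phi> (h i) x1) + dist (\<phi> (h i) x1) (\<phi> u (axis (k i)))"
      by (rule dist_triangle)
    moreover have "dist ?y (\<phi> (h i) x1) = dist (axis k0) a1"
      using hc[OF i] u by (simp add: a1(2))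
    ultimately show ?thesis using k0 near[OF i] by (simp add: dist_commute)
  qed
  have e_carrier: "e i \<in> carrier G" if "i \<le> sample_count" for i
    using hc[OF that] u by (simp add: e_def)
  have card_le: "card {f \<in> carrier G. dist a0 (\<phi> f a0) \<le> 2 * track_dist + \<eta>} \<le> sample_count"
    by (simp add: sample_count_def)
  obtain i j where ij: "i \<le> sample_count" "j \<le> sample_count" "i \<noteq> j" and "e i = e j"
    by (rule displacement_pigeonhole[where N = sample_count and e = e,
          OF m_closed[OF u pow_carrier] e_carrier e_near card_le])
  then have "h j \<otimes> inv (h i) \<otimes> u = u \<otimes> (g [^] k j \<otimes> inv (g [^] k i))"
    using inv_mult_eq_imp_conj_eq[OF hc[OF ij(1)] hc[OF ij(2)] u pow_carrier pow_carrier]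
    by (simp add: e_def)
  then have "h j \<otimes> inv (h i) \<otimes> u = u \<otimes> g [^] (k j - k i)" using g_carrier by (simp add: int_pow_diff)
  moreover have "h j \<otimes> inv (h i) \<in> H"
    using H h ij by (simp add: subgroup.m_closed subgroup.m_inv_closed)
  moreover have "k j - k i \<noteq> 0" "\<bar>k j - k i\<bar> \<le> shift_bound" using spread[OF ij] by auto
  ultimately show thesis by (intro that)
qed

lemma translate_in_nbhd_if_shift:
  assumes qY: "quasi_convex_subgroup G \<phi> \<Gamma> \<eta> H Y" and u: "u \<in> carrier G"
    and x1: "x1 \<in> \<phi> u ` A \<inter> Y" and z: "z \<in> H" "z \<otimes> u = u \<otimes> g [^] m" and "m \<noteq> 0"
    and window: "\<And>r. \<bar>r\<bar> < \<bar>m\<bar> \<Longrightarrow> dist a0 (axis r) \<le> D"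
  shows "\<phi> u ` A \<subseteq> nbhd Y (2 * \<eta> + D)"
proof -
  have H: "subgroup H G" and Yinv: "\<forall>h\<in>H. \<phi> h ` Y \<subseteq> Y"
    using qY unfolding quasi_convex_subgroup_def by auto
  have zc: "z \<in> carrier G" using subgroup.subset[OF H] z(1) by blast
  have shift: "\<phi> z (\<phi> u (axis n)) = \<phi> u (axis (n + m))" for n
  proof -
    have "\<phi> z (\<phi> u (axis n)) = \<phi> (z \<otimes> u) (axis n)" using zc u by (simp add: act_mult)
    also have "\<dots> = \<phi> u (\<phi> (g [^] m) (axis n))" using u by (simp add: z(2) act_mult)
    finally show ?thesis by (simp add: act_pow_axis add.commute)
  qed
  define S where "S = {n. \<exists>y\<in>Y. dist (\<phi> u (axis n)) y \<le> D + \<eta>}"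
  obtain a1 where a1: "a1 \<in> A" "x1 = \<phi> u a1" using x1 by blast
  obtain k0 where k0: "dist a1 (axis k0) \<le> \<eta>" using A_near_axis[OF a1(1)] .
  have S: "n \<in> S" for n
  proof (rule int_periodic_set_covers[OF \<open>m \<noteq> 0\<close>])
    show "n \<in> S \<longleftrightarrow> n + m \<in> S" for n
      using near_set_act_iff[OF H Yinv z(1), of "\<phi> u (axis n)" "D + \<eta>"] by (simp add: S_def shift)
    show "k0 + r \<in> S" if "\<bar>r\<bar> < \<bar>m\<bar>" for r
    proof -
      have "dist (\<phi> u (axis (k0 + r))) x1
          \<le> dist (\<phi> u (axis (k0 + r))) (\<phi> u (axis k0)) + dist (\<phi> u (axis k0)) x1"
        by (rule dist_triangle)
      moreover have "dist (\<phi> u (axis (k0 + r))) (\<phi> u (axis k0)) = dist a0 (axis r)"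
        using u dist_axis_shift[of k0 r] by (simp add: dist_commute)
      moreover have "dist (\<phi> u (axis k0)) x1 \<le> \<eta>" using u a1(2) k0 by (simp add: dist_commute)
      ultimately have "dist (\<phi> u (axis (k0 + r))) x1 \<le> D + \<eta>" using window[OF that] by linarith
      then show ?thesis using x1 unfolding S_def by blast
    qed
  qed
  show ?thesis
  proof
    fix x assume "x \<in> \<phi> u ` A"
    then obtain a' where a': "a' \<in> A" "x = \<phi> u a'" by blast
    obtain n where n: "dist a' (axis n) \<le> \<eta>" using A_near_axis[OF a'(1)] .
    obtain y where y: "y \<in> Y" "dist (\<phi> u (axis n)) y \<le> D + \<eta>" using S[of n] unfolding S_def by blast
    have "dist x (\<phi> u (axis n)) \<le> \<eta>" using u a'(2) n by simp
    then have "dist x y \<le> 2 * \<eta> + D" using y(2) dist_triangle[of x y "\<phi> u (axis n)"] by linarith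
    then show "x \<in> nbhd Y (2 * \<eta> + D)" by (rule nbhd_intro[OF y(1)])
  qed
qed

definition window_radius :: real where
  "window_radius = Max ((\<lambda>r. dist a0 (axis r)) ` {-shift_bound..shift_bound})"

definition theta_I :: real where
  "theta_I = max 1 (max (sample_count * sample_step) (2 * \<eta> + window_radius))"

lemma translate_in_nbhd_if_large_intersection:
  assumes qY: "quasi_convex_subgroup G \<phi> \<Gamma> \<eta> H Y" and u: "u \<in> carrier G"
    and big: "ereal theta_I < ediam (\<phi> u ` A \<inter> Y)"
  shows "\<phi> u ` A \<subseteq> nbhd Y theta_I"
proof -
  have "0 \<le> theta_I" by (simp add: theta_I_def)
  with big obtain x1 x2 where x: "x1 \<in> \<phi> u ` A \<inter> Y" "x2 \<in> \<phi> u ` A \<inter> Y"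
    and "theta_I < dist x1 x2"
    by (rule ediam_gtE)
  then have "sample_count * sample_step < dist x1 x2" by (simp add: theta_I_def)
  then obtain z m where z: "z \<in> H" "z \<otimes> u = u \<otimes> g [^] m" "m \<noteq> 0" "\<bar>m\<bar> \<le> shift_bound"
    using far_pair_shift[OF qY u x] by blast
  have "dist a0 (axis r) \<le> window_radius" if "\<bar>r\<bar> < \<bar>m\<bar>" for r
    unfolding window_radius_def using that z(4) by (intro Max_ge finite_imageI imageI) auto
  then have "\<phi> u ` A \<subseteq> nbhd Y (2 * \<eta> + window_radius)"
    using translate_in_nbhd_if_shift[OF qY u x(1) z(1,2,3)] by blast
  also have "\<dots> \<subseteq> nbhd Y theta_I" by (rule nbhd_mono) (simp add: theta_I_def)
  finally show ?thesis .
qed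

lemma coset_representative_near_base:
  assumes qY: "quasi_convex_subgroup G \<phi> \<Gamma> \<eta> H Y" and k: "k \<in> carrier G"
    and "a0 \<in> nbhd Y e" and "\<phi> k a0 \<in> nbhd Y e"
  obtains f where "f \<in> carrier G" "dist a0 (\<phi> f a0) \<le> 2 * e + 2 + \<eta>" "H #> k = H #> f"
proof -
  have H: "subgroup H G" using qY unfolding quasi_convex_subgroup_def by blast
  obtain y0 where y0: "y0 \<in> Y" "dist a0 y0 < e + 1" using \<open>a0 \<in> nbhd Y e\<close> by (rule nbhd_nearE)
  obtain h where h: "h \<in> H" "dist (\<phi> k a0) (\<phi> h y0) < e + 1 + \<eta>"
    using quasi_convex_subgroup_near_orbit[OF qY \<open>\<phi> k a0 \<in> nbhd Y e\<close> y0(1)] .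
  have hc: "h \<in> carrier G" using subgroup.subset[OF H] h(1) by blast
  have "dist a0 (\<phi> (inv h \<otimes> k) a0) = dist (\<phi> h a0) (\<phi> k a0)"
    using hc k by (simp add: act_mult dist_act_inv)
  also have "\<dots> \<le> dist (\<phi> h a0) (\<phi> h y0) + dist (\<phi> h y0) (\<phi> k a0)" by (rule dist_triangle)
  finally have "dist a0 (\<phi> (inv h \<otimes> k) a0) \<le> 2 * e + 2 + \<eta>"
    using hc y0(2) h(2) by (simp add: dist_commute)
  moreover have "H #> (inv h \<otimes> k) = H #> k"
    using coset_mult_assoc[OF subgroup.subset[OF H] inv_closed[OF hc] k]
      coset_join2[OF inv_closed[OF hc] H subgroup.m_inv_closed[OF H h(1)]] by simp
  ultimately show thesis using that[of "inv h \<otimes> k"] hc k by simp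
qed

lemma index_le_if_translates_in_nbhd:
  assumes qY: "quasi_convex_subgroup G \<phi> \<Gamma> \<eta> H Y" and K: "subgroup K G"
    and near: "\<And>k. k \<in> K \<Longrightarrow> \<phi> k ` A \<subseteq> nbhd Y e"
  shows "subgroup_index G K H \<le> ereal (card {f \<in> carrier G. dist a0 (\<phi> f a0) \<le> 2 * e + 2 + \<eta>})"
proof (rule subgroup_index_le_card[OF finite_displacement])
  fix k assume "k \<in> K"
  have "a0 \<in> nbhd Y e" using near[OF subgroup.one_closed[OF K]] a0 by auto
  moreover have "\<phi> k a0 \<in> nbhd Y e" using near[OF \<open>k \<in> K\<close>] a0 by blast
  moreover have "k \<in> carrier G" using subgroup.subset[OF K] \<open>k \<in> K\<close> by blast
  ultimately show "\<exists>f\<in>{f \<in> carrier G. dist a0 (\<phi> f a0) \<le> 2 * e + 2 + \<eta>}. H #> k = H #> f"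
    using coset_representative_near_base[OF qY] by (metis (mono_tags, lifting) mem_Collect_eq)
qed

definition theta :: real where
  "theta = max theta_I (card {f \<in> carrier G. dist a0 (\<phi> f a0) \<le> 2 * theta_I + 2 + \<eta>})"

lemma one_le_theta: "1 \<le> theta"
  by (simp add: theta_def theta_I_def)

lemma translate_in_nbhd_theta:
  assumes "quasi_convex_subgroup G \<phi> \<Gamma> \<eta> H Y" "u \<in> carrier G"
    and "ereal theta < ediam (\<phi> u ` A \<inter> Y)"
  shows "\<phi> u ` A \<subseteq> nbhd Y theta"
proof -
  have "theta_I \<le> theta" by (simp add: theta_def)
  then have "\<phi> u ` A \<subseteq> nbhd Y theta_I"
    using assms translate_in_nbhd_if_large_intersection by (meson ereal_less_eq(3) order_le_less_trans)
  also have "\<dots> \<subseteq> nbhd Y theta" by (rule nbhd_mono) fact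
  finally show ?thesis .
qed

lemma small_intersection_if_large_index:
  assumes qY: "quasi_convex_subgroup G \<phi> \<Gamma> \<eta> H Y" and K: "subgroup K G"
    and idx: "ereal theta < subgroup_index G K H"
  shows "\<exists>k\<in>K. ediam (\<phi> k ` A \<inter> Y) \<le> ereal theta"
proof (rule ccontr)
  assume none: "\<not> ?thesis"
  have "\<phi> k ` A \<subseteq> nbhd Y theta_I" if k: "k \<in> K" for k
  proof -
    have "ereal theta_I \<le> ereal theta" by (simp add: theta_def)
    also have "ereal theta < ediam (\<phi> k ` A \<inter> Y)" using none k by (simp add: not_le)
    finally show ?thesis
      using translate_in_nbhd_if_large_intersection[OF qY] subgroup.subset[OF K] k by blast
  qed
  then have "subgroup_index G K H
      \<le> ereal (card {f \<in> carrier G. dist a0 (\<phi> f a0) \<le> 2 * theta_I + 2 + \<eta>})"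
    by (rule index_le_if_translates_in_nbhd[OF qY K])
  also have "\<dots> \<le> ereal theta" by (simp add: theta_def)
  finally show False using idx by simp
qed

end

theorem mainTheorem12:
  fixes \<mu> \<nu> \<eta> :: real
    and G :: "('g, 'b) monoid_scheme"
    and \<phi> :: "'g \<Rightarrow> 'x::metric_space \<Rightarrow> 'x"
    and \<Gamma> :: "'x path set"
    and g :: 'g and A :: "'x set"
  assumes "path_system_group \<mu> \<nu> G \<phi> \<Gamma>"
    and "\<eta> \<ge> 0"
    and "quasi_convex_element G \<phi> \<Gamma> \<eta> g A"
  shows "\<exists>\<theta>::real. \<theta> \<ge> 1 \<and>
    (\<forall>H Y. quasi_convex_subgroup G \<phi> \<Gamma> \<eta> H Y \<longrightarrow>
       (\<forall>u\<in>carrier G. ediam (\<phi> u ` A \<inter> Y) > ereal \<theta> \<longrightarrow> \<phi> u ` A \<subseteq> nbhd Y \<theta>) \<and>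
       (\<forall>K. subgroup K G \<and> H \<subseteq> K \<longrightarrow> subgroup_index G K H > ereal \<theta> \<longrightarrow>
          (\<exists>k\<in>K. ediam (\<phi> k ` A \<inter> Y) \<le> ereal \<theta>)))"
proof (cases "A = {}")
  case True
  have "\<exists>k\<in>K. ediam (\<phi> k ` A \<inter> Y) \<le> ereal 1" if "subgroup K G" for K Y
    using subgroup.one_closed[OF that] True by (auto simp: ediam_def)
  then show ?thesis using True by (intro exI[of _ 1]) (auto simp: ediam_def)
next
  case False
  then obtain a0 where "a0 \<in> A" by blast
  then interpret quasi_convex_element_orbit \<mu> \<nu> G \<phi> \<Gamma> \<eta> g A a0
    using assms by (intro quasi_convex_element_orbit.intro path_system_group_setting.intro
        quasi_convex_element_orbit_axioms.intro)
  show ?thesis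
  proof (intro exI[of _ theta] conjI allI impI ballI)
    fix H Y u assume "quasi_convex_subgroup G \<phi> \<Gamma> \<eta> H Y" "u \<in> carrier G"
      "ereal theta < ediam (\<phi> u ` A \<inter> Y)"
    then show "\<phi> u ` A \<subseteq> nbhd Y theta" by (rule translate_in_nbhd_theta)
  next
    fix H Y K assume "quasi_convex_subgroup G \<phi> \<Gamma> \<eta> H Y" "subgroup K G \<and> H \<subseteq> K"
      "ereal theta < subgroup_index G K H"
    then show "\<exists>k\<in>K. ediam (\<phi> k ` A \<inter> Y) \<le> ereal theta"
      using small_intersection_if_large_index by blast
  qed (rule one_le_theta)
qed

end
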